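(* In the line network model (see context), assume a unique worst link: there is $m$ with $p_m=\max_i p_i<1$ and $p_i<p_m$ for $i\ne m$, and let $A:=1-p_m$. Then $\mathbb{E}R_t=A\,t-r(t)$ where the function $r$ is bounded uniformly in $t\ge0$ and $n\ge1$, and consequently $\mathbb{E}T_n=\frac{n}{A}+O(1)$ as $n\to\infty$.
   Context: Line network model. Fix integers $\ell\ge1$, $n\ge1$ and erasure probabilities $p_1,\dots,p_\ell\in[0,1)$. Let $\{z_{t,i}\}$ be independent Bernoulli variables with $\mathbb{P}(z_{t,i}=1)=1-p_i$. The rank $\rho_i(t)$ of node $N^{(i)}$ after $t$ steps satisfies $\rho_1(t)=n$, $\rho_i(0)=0$ for $i\ge2$, and $\rho_{i+1}(t)=\rho_{i+1}(t-1)+z_{t,i}\mathbf 1\{\rho_i(t-1)>\rho_{i+1}(t-1)\}$. $R_t:=\rho_{\ell+1}(t)$ and $T_n:=\min\{t:\rho_{\ell+1}(t)=n\}$. Here the bound on $r(t)$ is meant in the regime before the source packets are exhausted, i.e. with the source treated as having an unlimited supply of packets (as $n\to\infty$). *)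

theory Defs
  imports "HOL-Probability.Probability"
begin

text \<open>Link i (1 \<le> i \<le> l) goes from node N^(i) to node N^(i+1).
  rk s z t i is the rank rho_(i+1)(t) of node N^(i+1) after t steps, where the
  source N^(1) has rank s (an extended natural; s = \<infinity> models an unlimited
  supply of source packets) and z t i is the success indicator z_(t,i).\<close>

fun rk :: "enat \<Rightarrow> (nat \<Rightarrow> nat \<Rightarrow> bool) \<Rightarrow> nat \<Rightarrow> nat \<Rightarrow> nat" where
  "rk s z 0 i = 0"
| "rk s z (Suc t) i =
     rk s z t i +
     (if z (Suc t) i \<and>
         (if i \<le> 1 then s else enat (rk s z t (i - 1))) > enat (rk s z t i)
      then 1 else 0)"

definition erasure_space :: "(nat \<Rightarrow> real) \<Rightarrow> (nat \<times> nat \<Rightarrow> bool) measure" where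
  "erasure_space p = (\<Pi>\<^sub>M ti\<in>UNIV. measure_pmf (bernoulli_pmf (1 - p (snd ti))))"

definition R :: "nat \<Rightarrow> enat \<Rightarrow> nat \<Rightarrow> (nat \<times> nat \<Rightarrow> bool) \<Rightarrow> nat" where
  "R l s t \<omega> = rk s (curry \<omega>) t l"

definition T :: "nat \<Rightarrow> nat \<Rightarrow> (nat \<times> nat \<Rightarrow> bool) \<Rightarrow> ennreal" where
  "T l n \<omega> = (if \<exists>t. R l (enat n) t \<omega> = n
               then ennreal (real (LEAST t. R l (enat n) t \<omega> = n)) else \<infinity>)"

end

theory Submission
  imports Defs
begin

(* Let Z_t be the number of successes on the worst link m up to time t; then
   R_t <= Z_t and E Z_t = A t.  The whole argument controls the gap Z_t - R_t through the
   Lyapunov functions  V_k(t) = y^(Z_t) u^(rho_(k+1)(t))  with y = 1 + delta > 1, u = 1/y,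
   where delta is the margin of the worst link over all other links.  Because links other
   than m are strictly faster, one step of the dynamics contracts E V_k by a factor
   Phi < 1 up to a term coming from link k - 1, while at the bottleneck E V_m only grows by
   an amount controlled by the upstream link.  Inducting along the line gives
   sup_t E V_l(t) < infinity, hence E (Z_t - R_t) = O(1) (first claim).
   For the second claim E T_n = sum_t P(R_t < n), compared with sum_t P(Z_t < n), whose
   value is n/A up to O(1).  The excess is bounded by "Palm" sums
   sum_t E[1{Z_t = N} V_l(t)], which are bounded uniformly in N by the same induction along
   the line, now also inducting on N. *)

section \<open>Independent erasures\<close>

definition coord_law :: "(nat \<Rightarrow> real) \<Rightarrow> nat \<times> nat \<Rightarrow> bool measure" where
  "coord_law p = (\<lambda>ti. measure_pmf (bernoulli_pmf (1 - p (snd ti))))"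

lemma erasure_space_eq_PiM: "erasure_space p = PiM UNIV (coord_law p)"
  by (simp add: erasure_space_def coord_law_def)

lemma prob_space_coord_law: "prob_space (coord_law p i)"
  by (simp add: coord_law_def measure_pmf.prob_space_axioms)

lemma sets_coord_law [simp]: "sets (coord_law p i) = UNIV"
  and space_coord_law [simp]: "space (coord_law p i) = UNIV"
  by (simp_all add: coord_law_def)

lemma prob_space_erasure_space: "prob_space (erasure_space p)"
  unfolding erasure_space_eq_PiM by (intro prob_space_PiM prob_space_coord_law)

lemma space_erasure_space [simp]: "space (erasure_space p) = UNIV"
  unfolding erasure_space_eq_PiM by (simp add: space_PiM)

text \<open>A function of the sample point depends only on the coordinates in J.  All random
  variables of the network up to time t are of this kind for a finite J.\<close>
definition depends_on :: "(nat \<times> nat) set \<Rightarrow> ((nat \<times> nat \<Rightarrow> bool) \<Rightarrow> 'b) \<Rightarrow> bool" where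
  "depends_on J F \<longleftrightarrow> (\<forall>\<omega> \<omega>'. (\<forall>x\<in>J. \<omega> x = \<omega>' x) \<longrightarrow> F \<omega> = F \<omega>')"

lemma depends_on_mono: "depends_on J F \<Longrightarrow> J \<subseteq> J' \<Longrightarrow> depends_on J' F"
  unfolding depends_on_def by blast

lemma depends_on_combine:
  assumes "depends_on J f" "depends_on J g" "a \<in> J" "b \<in> J"
  shows "depends_on J (\<lambda>\<omega>. H (\<omega> a) (\<omega> b) (f \<omega>) (g \<omega>))"
  unfolding depends_on_def
proof (intro allI impI)
  fix \<omega> \<omega>' :: "nat \<times> nat \<Rightarrow> bool"
  assume agree: "\<forall>x\<in>J. \<omega> x = \<omega>' x"
  then have "f \<omega> = f \<omega>'" "g \<omega> = g \<omega>'"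
    using assms(1,2) unfolding depends_on_def by blast+
  moreover have "\<omega> a = \<omega>' a" "\<omega> b = \<omega>' b" using agree assms(3,4) by auto
  ultimately show "H (\<omega> a) (\<omega> b) (f \<omega>) (g \<omega>) = H (\<omega>' a) (\<omega>' b) (f \<omega>') (g \<omega>')" by simp
qed

lemma measurable_finite_PiM:
  fixes M :: "'i \<Rightarrow> 'a::finite measure"
  assumes "finite J" and sets_M: "\<And>i. sets (M i) = UNIV"
  shows "f \<in> borel_measurable (PiM J M)"
proof -
  have space_M: "space (M i) = UNIV" for i
    by (metis sets.sets_into_space sets_M UNIV_I Pow_UNIV top.extremum_uniqueI sets.top)
  have fin: "finite (space (PiM J M))"
    using assms(1) by (simp add: space_PiM space_M finite_PiE)
  have singleton: "{r} \<in> sets (PiM J M)" if "r \<in> space (PiM J M)" for r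
  proof -
    have r: "r \<in> extensional J" using that by (simp add: space_PiM PiE_def)
    have "{r} = PiE J (\<lambda>i. {r i})" by (rule PiE_singleton[OF r, symmetric])
    also have "\<dots> \<in> sets (PiM J M)"
      using assms by (intro sets_PiM_I_finite) auto
    finally show ?thesis .
  qed
  have all: "S \<in> sets (PiM J M)" if "S \<subseteq> space (PiM J M)" for S
  proof -
    have "finite S" using fin that by (rule rev_finite_subset)
    then have "(\<Union>r\<in>S. {r}) \<in> sets (PiM J M)"
      by (rule sets.finite_UN) (use that singleton in blast)
    then show ?thesis by simp
  qed
  show ?thesis
  proof (rule measurableI)
    fix A show "f -` A \<inter> space (PiM J M) \<in> sets (PiM J M)" by (rule all) blast
  qed simp
qed

definition extend_false :: "(nat \<times> nat) set \<Rightarrow> (nat \<times> nat \<Rightarrow> bool) \<Rightarrow> (nat \<times> nat \<Rightarrow> bool)" where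
  "extend_false J r = (\<lambda>i. if i \<in> J then r i else False)"

lemma depends_on_restrict: "depends_on J F \<Longrightarrow> F (extend_false J (restrict \<omega> J)) = F \<omega>"
  unfolding depends_on_def extend_false_def by simp

lemma depends_on_measurable:
  assumes "finite J" "depends_on J F"
  shows "(F :: _ \<Rightarrow> real) \<in> borel_measurable (erasure_space p)"
proof -
  have "(\<lambda>\<omega>. (F \<circ> extend_false J) (restrict \<omega> J)) \<in> borel_measurable (erasure_space p)"
    unfolding erasure_space_eq_PiM
    by (rule measurable_compose[OF measurable_restrict_subset measurable_finite_PiM])
      (use assms in auto)
  then show ?thesis using depends_on_restrict[OF assms(2)] by simp
qed

text \<open>Such a function takes finitely many values, so it is bounded and integrable.\<close>
lemma depends_on_integrable:
  assumes "finite J" "depends_on J F"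
  shows "integrable (erasure_space p) (F :: _ \<Rightarrow> real)"
proof -
  interpret prob_space "erasure_space p" by (rule prob_space_erasure_space)
  let ?B = "Max ((\<lambda>r. norm (F (extend_false J r))) ` PiE J (\<lambda>_. UNIV))"
  have "norm (F \<omega>) \<le> ?B" for \<omega>
  proof -
    have "restrict \<omega> J \<in> PiE J (\<lambda>_. UNIV)" by auto
    then have "norm (F (extend_false J (restrict \<omega> J))) \<le> ?B"
      using assms(1) by (intro Max_ge) (simp_all add: finite_PiE)
    then show ?thesis using depends_on_restrict[OF assms(2)] by simp
  qed
  then show ?thesis
    by (intro integrable_const_bound[where B = ?B] depends_on_measurable[OF assms]) auto
qed

lemma indep_coords:
  "prob_space.indep_vars (erasure_space p) (coord_law p) (\<lambda>i \<omega>. \<omega> i) UNIV"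
proof -
  interpret prob_space "erasure_space p" by (rule prob_space_erasure_space)
  show ?thesis
  proof (subst indep_vars_iff_distr_eq_PiM)
    show "random_variable (coord_law p i) (\<lambda>\<omega>. \<omega> i)" for i
      unfolding erasure_space_eq_PiM by (rule measurable_component_singleton) auto
    have h1: "(\<lambda>x. \<lambda>i\<in>UNIV. x i) = (\<lambda>x. x)" by (simp add: restrict_def)
    have h2: "PiM UNIV (\<lambda>i. distr (PiM UNIV (coord_law p)) (coord_law p i) (\<lambda>x. x i))
        = PiM UNIV (coord_law p)"
      by (intro PiM_cong refl distr_PiM_component prob_space_coord_law) auto
    show "distr (erasure_space p) (Pi\<^sub>M UNIV (coord_law p)) (\<lambda>x. \<lambda>i\<in>UNIV. x i) =
      Pi\<^sub>M UNIV (\<lambda>i. distr (erasure_space p) (coord_law p i) (\<lambda>x. x i))"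
      unfolding erasure_space_eq_PiM h1 h2 by (rule distr_id)
  qed simp
qed

lemma expectation_factor:
  assumes "finite J" "depends_on J F" "a \<notin> J"
  shows "(\<integral>\<omega>. F \<omega> * g (\<omega> a) \<partial>erasure_space p) =
         (\<integral>\<omega>. F \<omega> \<partial>erasure_space p) * (\<integral>\<omega>. (g (\<omega> a) :: real) \<partial>erasure_space p)"
proof -
  interpret prob_space "erasure_space p" by (rule prob_space_erasure_space)
  have iv: "indep_var (PiM J (coord_law p)) (\<lambda>\<omega>. restrict (\<lambda>i. \<omega> i) J)
                      (PiM {a} (coord_law p)) (\<lambda>\<omega>. restrict (\<lambda>i. \<omega> i) {a})"
    using assms(3) by (intro indep_var_restrict[OF indep_coords]) auto
  have iv2: "indep_var borel ((F \<circ> extend_false J) \<circ> (\<lambda>\<omega>. restrict (\<lambda>i. \<omega> i) J))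
                       borel ((\<lambda>r. g (r a)) \<circ> (\<lambda>\<omega>. restrict (\<lambda>i. \<omega> i) {a}))"
    by (intro indep_var_compose[OF iv] measurable_finite_PiM assms(1)) simp_all
  have e1: "(F \<circ> extend_false J) \<circ> (\<lambda>\<omega>. restrict (\<lambda>i. \<omega> i) J) = F"
    using depends_on_restrict[OF assms(2)] by (auto simp: fun_eq_iff)
  have e2: "(\<lambda>r. g (r a)) \<circ> (\<lambda>\<omega>. restrict (\<lambda>i. \<omega> i) {a}) = (\<lambda>\<omega>. g (\<omega> a))"
    by (auto simp: fun_eq_iff)
  have dg: "depends_on {a} (\<lambda>\<omega>. g (\<omega> a))" by (simp add: depends_on_def)
  show ?thesis
    using indep_var_lebesgue_integral[OF iv2[unfolded e1 e2] depends_on_integrable[OF assms(1,2)]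
        depends_on_integrable[OF _ dg]]
    by simp
qed

lemma expectation_factor2:
  assumes "finite J" "depends_on J F" "a \<notin> J" "b \<notin> J" "a \<noteq> b"
  shows "(\<integral>\<omega>. F \<omega> * ga (\<omega> a) * gb (\<omega> b) \<partial>erasure_space p) =
         (\<integral>\<omega>. F \<omega> \<partial>erasure_space p) * (\<integral>\<omega>. (ga (\<omega> a) :: real) \<partial>erasure_space p)
          * (\<integral>\<omega>. (gb (\<omega> b) :: real) \<partial>erasure_space p)"
proof -
  have "depends_on (insert a J) (\<lambda>\<omega>. F \<omega> * ga (\<omega> a))"
    using assms(2) unfolding depends_on_def by auto
  then have "(\<integral>\<omega>. F \<omega> * ga (\<omega> a) * gb (\<omega> b) \<partial>erasure_space p) =
     (\<integral>\<omega>. F \<omega> * ga (\<omega> a) \<partial>erasure_space p) * (\<integral>\<omega>. (gb (\<omega> b) :: real) \<partial>erasure_space p)"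
    by (rule expectation_factor[rotated]) (use assms in auto)
  then show ?thesis by (simp only: expectation_factor[OF assms(1,2,3)])
qed

lemma expectation_coord:
  assumes "0 \<le> p (snd a)" "p (snd a) \<le> 1"
  shows "(\<integral>\<omega>. (g (\<omega> a) :: real) \<partial>erasure_space p) = g True * (1 - p (snd a)) + g False * p (snd a)"
proof -
  have "(\<integral>\<omega>. g (\<omega> a) \<partial>erasure_space p) =
      (\<integral>x. g x \<partial>distr (erasure_space p) (coord_law p a) (\<lambda>\<omega>. \<omega> a))"
    unfolding erasure_space_eq_PiM
    by (rule integral_distr[symmetric], rule measurable_component_singleton)
      (simp_all add: measurable_def)
  also have "distr (erasure_space p) (coord_law p a) (\<lambda>\<omega>. \<omega> a) = coord_law p a"
    unfolding erasure_space_eq_PiM by (intro distr_PiM_component prob_space_coord_law) auto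
  finally show ?thesis using assms by (simp add: coord_law_def)
qed


section \<open>The rank dynamics\<close>

lemma rk_local:
  "(\<forall>s j. s \<le> t \<longrightarrow> j \<le> i \<longrightarrow> z s j = z' s j) \<Longrightarrow> rk s0 z t i = rk s0 z' t i"
proof (induction t arbitrary: i)
  case 0 then show ?case by simp
next
  case (Suc t)
  have "rk s0 z t i = rk s0 z' t i" "rk s0 z t (i - 1) = rk s0 z' t (i - 1)"
    using Suc.prems by (intro Suc.IH; auto)+
  moreover have "z (Suc t) i = z' (Suc t) i" using Suc.prems by auto
  ultimately show ?case by (simp only: rk.simps)
qed

lemma rk_le_pred: "2 \<le> i \<Longrightarrow> rk s z t i \<le> rk s z t (i - 1)"
  by (induction t) auto

lemma rk_antimono_line: assumes "1 \<le> i" "i \<le> j" shows "rk s z t j \<le> rk s z t i"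
  using assms(2)
proof (induction j rule: dec_induct)
  case (step j)
  have "rk s z t (Suc j) \<le> rk s z t j" using rk_le_pred[of "Suc j"] step assms by simp
  then show ?case using step by simp
qed simp

lemma rk_mono_time: "t \<le> t' \<Longrightarrow> rk s z t i \<le> rk s z t' i"
  by (induction t' rule: dec_induct) auto

lemma rk_finite_source: "rk (enat n) z t i = min n (rk \<infinity> z t i)"
proof (induction t arbitrary: i)
  case 0 then show ?case by simp
next
  case (Suc t)
  show ?case
  proof (cases "i \<le> 1")
    case True
    then show ?thesis using Suc.IH[of i] by (auto simp: min_def)
  next
    case False
    have "rk \<infinity> z t i \<le> rk \<infinity> z t (i - 1)" using False by (intro rk_le_pred) auto
    then show ?thesis using False Suc.IH[of i] Suc.IH[of "i - 1"] by (auto simp: min_def)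
  qed
qed

text \<open>Number of successes on link m up to time t: the rank node N^(m+1) would have
  if link m were never starved.\<close>
fun succ_count :: "nat \<Rightarrow> (nat \<times> nat \<Rightarrow> bool) \<Rightarrow> nat \<Rightarrow> nat" where
  "succ_count m \<omega> 0 = 0"
| "succ_count m \<omega> (Suc t) = succ_count m \<omega> t + (if \<omega> (Suc t, m) then 1 else 0)"

lemma rk_le_succ_count: "rk s (curry \<omega>) t m \<le> succ_count m \<omega> t"
  by (induction t) auto

lemma succ_count_mono: "t \<le> t' \<Longrightarrow> succ_count m \<omega> t \<le> succ_count m \<omega> t'"
  by (induction t' rule: dec_induct) auto

lemma succ_count_le: "succ_count m \<omega> t \<le> t"
  by (induction t) auto

text \<open>The lag of node m+1 behind the success count of link m (successes that moved no
  packet) never decreases.\<close>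
lemma lag_mono:
  "t \<le> t' \<Longrightarrow>
   succ_count m \<omega> t - rk s (curry \<omega>) t m \<le> succ_count m \<omega> t' - rk s (curry \<omega>) t' m"
proof (induction t' rule: dec_induct)
  case (step t')
  have "rk s (curry \<omega>) (Suc t') m \<le> rk s (curry \<omega>) t' m + (if \<omega> (Suc t', m) then 1 else 0)"
    by auto
  moreover have "succ_count m \<omega> (Suc t') = succ_count m \<omega> t' + (if \<omega> (Suc t', m) then 1 else 0)"
    by simp
  ultimately show ?case
    using step rk_le_succ_count[of s \<omega> t' m] rk_le_succ_count[of s \<omega> "Suc t'" m]
    by linarith
qed simp

definition window :: "nat \<Rightarrow> nat \<Rightarrow> (nat \<times> nat) set" where
  "window l t = {..t} \<times> {..l}"

lemma finite_window [simp]: "finite (window l t)"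
  by (simp add: window_def)

lemma in_window [simp]: "(a, k) \<in> window l t \<longleftrightarrow> a \<le> t \<and> k \<le> l"
  by (simp add: window_def)

lemma depends_on_window_Suc: "depends_on (window l t) f \<Longrightarrow> depends_on (window l (Suc t)) f"
  by (erule depends_on_mono) (auto simp: window_def)

lemma depends_on_state:
  assumes "k \<le> l" "m \<le> l"
  shows "depends_on (window l t) (\<lambda>\<omega>. f (succ_count m \<omega> t) (rk s (curry \<omega>) t k))"
  unfolding depends_on_def
proof (intro allI impI)
  fix \<omega> \<omega>' :: "nat \<times> nat \<Rightarrow> bool"
  assume agree: "\<forall>x\<in>window l t. \<omega> x = \<omega>' x"
  have "succ_count m \<omega> t' = succ_count m \<omega>' t'" if "t' \<le> t" for t'
    using that agree assms(2) by (induction t') auto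
  then have "succ_count m \<omega> t = succ_count m \<omega>' t" by simp
  moreover have "rk s (curry \<omega>) t k = rk s (curry \<omega>') t k"
    using agree assms(1) by (intro rk_local) auto
  ultimately show "f (succ_count m \<omega> t) (rk s (curry \<omega>) t k) =
      f (succ_count m \<omega>' t) (rk s (curry \<omega>') t k)" by simp
qed

text \<open>The delay T_n counts the steps at which the last node still misses one of the n
  source packets; with a finite source these are the steps with R_t < n for the
  unlimited source.\<close>
lemma T_eq_suminf: "T l n \<omega> = (\<Sum>t. ennreal (of_bool (rk \<infinity> (curry \<omega>) t l < n)))"
proof -
  have Rn: "R l (enat n) t \<omega> = min n (rk \<infinity> (curry \<omega>) t l)" for t
    by (simp add: R_def rk_finite_source)
  show ?thesis
  proof (cases "\<exists>t. R l (enat n) t \<omega> = n")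
    case True
    define t0 where "t0 = (LEAST t. R l (enat n) t \<omega> = n)"
    have t0: "R l (enat n) t0 \<omega> = n" using True unfolding t0_def by (rule LeastI_ex)
    have below: "rk \<infinity> (curry \<omega>) t l < n \<longleftrightarrow> t < t0" for t
    proof
      assume below_n: "rk \<infinity> (curry \<omega>) t l < n"
      show "t < t0"
      proof (rule ccontr)
        assume "\<not> t < t0"
        then have "rk \<infinity> (curry \<omega>) t0 l \<le> rk \<infinity> (curry \<omega>) t l" by (intro rk_mono_time) simp
        moreover have "n \<le> rk \<infinity> (curry \<omega>) t0 l" using t0 Rn[of t0] by simp
        ultimately show False using below_n by simp
      qed
    next
      assume "t < t0"
      then have "R l (enat n) t \<omega> \<noteq> n" unfolding t0_def by (rule not_less_Least)
      then show "rk \<infinity> (curry \<omega>) t l < n" using Rn[of t] by (simp add: min_def split: if_splits)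
    qed
    have "(\<Sum>t. ennreal (of_bool (rk \<infinity> (curry \<omega>) t l < n))) =
        (\<Sum>t<t0. ennreal (of_bool (rk \<infinity> (curry \<omega>) t l < n)))"
      by (rule suminf_finite) (auto simp: below)
    also have "\<dots> = ennreal (real t0)"
      by (simp add: below ennreal_of_nat_eq_real_of_nat)
    finally show ?thesis using True by (simp add: T_def t0_def)
  next
    case False
    then have "rk \<infinity> (curry \<omega>) t l < n" for t using Rn[of t] by (auto simp: min_def split: if_splits)
    then have "(\<Sum>t. ennreal (of_bool (rk \<infinity> (curry \<omega>) t l < n))) = \<top>"
      using summable_iff_suminf_neq_top[of "\<lambda>_. 1"] by (simp add: summable_const_iff)
    then show ?thesis using False by (simp add: T_def)
  qed
qed

section \<open>The line network with a unique bottleneck\<close>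

locale line_network =
  fixes l :: nat and p :: "nat \<Rightarrow> real" and m :: nat
  assumes l_pos: "l \<ge> 1"
    and p_range: "\<forall>i\<in>{1..l}. 0 \<le> p i \<and> p i < 1"
    and m_range: "m \<in> {1..l}"
    and m_unique: "\<forall>i\<in>{1..l}. i \<noteq> m \<longrightarrow> p i < p m"
begin

abbreviation M :: "(nat \<times> nat \<Rightarrow> bool) measure" where
  "M \<equiv> erasure_space p"

abbreviation Z :: "(nat \<times> nat \<Rightarrow> bool) \<Rightarrow> nat \<Rightarrow> nat" where
  "Z \<omega> t \<equiv> succ_count m \<omega> t"

abbreviation rank :: "(nat \<times> nat \<Rightarrow> bool) \<Rightarrow> nat \<Rightarrow> nat \<Rightarrow> nat" where
  "rank \<omega> t k \<equiv> rk \<infinity> (curry \<omega>) t k"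

text \<open>A is the throughput of the bottleneck and delta > 0 its margin over every other link.
  The Lyapunov weights are y = 1 + delta and u = 1/y; Ey and psi k are the expected
  one-step factors y^(z_(t,m)) and u^(z_(t,k)).  Phi < 1 is the contraction rate.\<close>
definition "A = 1 - p m"
definition "delta = Min (insert 1 ((\<lambda>k. p m - p k) ` ({1..l} - {m})))"
definition "y = 1 + delta"
definition "u = 1 / (1 + delta)"
definition "Ey = 1 + A * delta"
definition "Phi = Ey * (1 - (A + delta) * delta / (1 + delta))"
definition "psi k = p k + (1 - p k) * u"

lemma p_link: "k \<in> {1..l} \<Longrightarrow> 0 \<le> p k \<and> p k < 1"
  using p_range by auto

lemma m_le: "m \<le> l" and m_ge: "1 \<le> m"
  using m_range by auto

lemma A_pos: "0 < A" and A_le: "A \<le> 1"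
  using p_link[OF m_range] by (auto simp: A_def)

lemma delta_pos: "0 < delta"
  unfolding delta_def using m_unique by (subst Min_gr_iff) auto

lemma delta_le1: "delta \<le> 1"
  unfolding delta_def by (rule Min_le) auto

lemma delta_le: "k \<in> {1..l} \<Longrightarrow> k \<noteq> m \<Longrightarrow> delta \<le> p m - p k"
  unfolding delta_def by (rule Min_le) auto

lemma y_gt1: "1 < y" using delta_pos by (simp add: y_def)
lemma u_pos: "0 < u" and u_lt1: "u < 1" using delta_pos by (auto simp: u_def)
lemma y_times_u: "y * u = 1" using delta_pos by (simp add: y_def u_def)
lemma Ey_ge1: "1 \<le> Ey" using A_pos delta_pos by (simp add: Ey_def)
lemma Ey_eq: "Ey = (1 - A) + A * y" by (simp add: Ey_def y_def algebra_simps)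

lemma psi_nonneg: "k \<in> {1..l} \<Longrightarrow> 0 \<le> psi k"
  using p_link[of k] u_pos by (simp add: psi_def)

lemma psi_le1: "k \<in> {1..l} \<Longrightarrow> psi k \<le> 1"
proof -
  assume k: "k \<in> {1..l}"
  have "psi k = 1 - (1 - p k) * (1 - u)" by (simp add: psi_def algebra_simps)
  also have "\<dots> \<le> 1" using p_link[OF k] u_lt1 by simp
  finally show ?thesis .
qed

lemma Phi_nonneg: "0 \<le> Phi"
proof -
  have "(A + delta) * delta \<le> (1 + delta) * 1"
    using A_le delta_le1 delta_pos by (intro mult_mono) auto
  then have "(A + delta) * delta / (1 + delta) \<le> 1" using delta_pos by simp
  then show ?thesis unfolding Phi_def using Ey_ge1 by simp
qed

lemma Phi_lt1: "Phi < 1"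
proof -
  have key: "A - A * A - A * delta < 1"
  proof -
    have "0 \<le> (A - 1/2)^2" by simp
    then have "A - A * A \<le> 1/4" by (simp add: power2_eq_square algebra_simps)
    then show ?thesis using mult_pos_pos[OF A_pos delta_pos] by linarith
  qed
  have "Phi * (1 + delta) = (1 + A * delta) * (1 + delta - (A + delta) * delta)"
    unfolding Phi_def Ey_def using delta_pos by (simp add: field_simps)
  also have "\<dots> = 1 + delta + delta * delta * (A - A * A - A * delta - 1)"
    by (simp add: algebra_simps)
  also have "\<dots> < 1 + delta"
    using mult_pos_neg[of "delta * delta" "A - A * A - A * delta - 1"] key delta_pos by simp
  finally show ?thesis using delta_pos by simp
qed

text \<open>The margin delta is what makes every non-bottleneck link contract.\<close>
lemma Ey_psi_le_Phi: "k \<in> {1..l} \<Longrightarrow> k \<noteq> m \<Longrightarrow> Ey * psi k \<le> Phi"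
proof -
  assume k: "k \<in> {1..l}" "k \<noteq> m"
  have margin: "A + delta \<le> 1 - p k" using delta_le[OF k] by (simp add: A_def)
  have "psi k = 1 - (1 - p k) * (delta / (1 + delta))" using delta_pos
    by (simp add: psi_def u_def field_simps)
  also have "\<dots> \<le> 1 - (A + delta) * (delta / (1 + delta))"
    using margin delta_pos by (intro diff_left_mono mult_right_mono) auto
  finally have "psi k \<le> 1 - (A + delta) * delta / (1 + delta)" by simp
  then show ?thesis unfolding Phi_def using Ey_ge1 by (simp add: mult_left_mono)
qed

lemma integrable_window: "depends_on (window l t) (f :: _ \<Rightarrow> real) \<Longrightarrow> integrable M f"
  by (rule depends_on_integrable[OF finite_window])

lemma depends_on_Z: "depends_on (window l t) (\<lambda>\<omega>. f (Z \<omega> t))"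
  using depends_on_state[of m l m t "\<lambda>a b. f a"] m_le by simp

lemma depends_on_rank: "depends_on (window l t) (\<lambda>\<omega>. f (rank \<omega> t l))"
  using depends_on_state[of l l m t "\<lambda>a b. f b"] m_le by simp

lemma integrable_times_link:
  "depends_on (window l t) F \<Longrightarrow> k \<le> l \<Longrightarrow>
   integrable M (\<lambda>\<omega>. (F \<omega> :: real) * ga (\<omega> (Suc t, k)))"
  using depends_on_combine[OF depends_on_window_Suc[of l t F] depends_on_window_Suc[of l t F],
      of "(Suc t, k)" "(Suc t, k)" "\<lambda>x z v w. v * ga x"]
  by (intro integrable_window[of "Suc t"]) auto

lemma integrable_times_links:
  "depends_on (window l t) F \<Longrightarrow> k \<le> l \<Longrightarrow>
   integrable M (\<lambda>\<omega>. (F \<omega> :: real) * ga (\<omega> (Suc t, m)) * gb (\<omega> (Suc t, k)))"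
  using depends_on_combine[OF depends_on_window_Suc[of l t F] depends_on_window_Suc[of l t F],
      of "(Suc t, m)" "(Suc t, k)" "\<lambda>x z v w. v * ga x * gb z"] m_le
  by (intro integrable_window[of "Suc t"]) auto

lemma expectation_times_link_m:
  assumes "depends_on (window l t) F"
  shows "(\<integral>\<omega>. (F \<omega> :: real) * ga (\<omega> (Suc t, m)) \<partial>M) =
    (\<integral>\<omega>. F \<omega> \<partial>M) * (ga True * A + ga False * (1 - A))"
  using expectation_factor[OF finite_window assms, where a="(Suc t, m)" and g=ga and p=p]
    expectation_coord[of p "(Suc t, m)" ga] p_link[OF m_range]
  by (simp add: A_def)

lemma expectation_times_links:
  assumes "depends_on (window l t) F" and k: "k \<in> {1..l}" "k \<noteq> m"
  shows "(\<integral>\<omega>. (F \<omega> :: real) * ga (\<omega> (Suc t, m)) * gb (\<omega> (Suc t, k)) \<partial>M) =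
    (\<integral>\<omega>. F \<omega> \<partial>M) * (ga True * A + ga False * (1 - A)) * (gb True * (1 - p k) + gb False * p k)"
  using expectation_factor2[OF finite_window assms(1), where a="(Suc t, m)" and b="(Suc t, k)"
      and ga=ga and gb=gb and p=p]
    expectation_coord[of p "(Suc t, m)" ga] expectation_coord[of p "(Suc t, k)" gb]
    p_link[OF m_range] p_link[OF k(1)] k
  by (simp add: A_def)

lemma expectation_Z: "(\<integral>\<omega>. real (Z \<omega> t) \<partial>M) = A * real t"
proof (induction t)
  case 0 then show ?case by simp
next
  case (Suc t)
  have success: "depends_on (window l (Suc t)) (\<lambda>\<omega>. of_bool (\<omega> (Suc t, m)) :: real)"
    unfolding depends_on_def using m_le by auto
  have "(\<integral>\<omega>. real (Z \<omega> (Suc t)) \<partial>M) = (\<integral>\<omega>. real (Z \<omega> t) + of_bool (\<omega> (Suc t, m)) \<partial>M)"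
    by (rule Bochner_Integration.integral_cong) auto
  also have "\<dots> = (\<integral>\<omega>. real (Z \<omega> t) \<partial>M) + (\<integral>\<omega>. of_bool (\<omega> (Suc t, m)) \<partial>M)"
    using integrable_window[OF depends_on_Z] integrable_window[OF success] by simp
  also have "(\<integral>\<omega>. of_bool (\<omega> (Suc t, m)) \<partial>M) = A"
    using expectation_coord[of p "(Suc t, m)" of_bool] p_link[OF m_range] by (simp add: A_def)
  finally show ?case using Suc by (simp add: algebra_simps)
qed

subsection \<open>The Lyapunov functions\<close>

text \<open>V k t = y^(Z_t) u^(rho_(k+1)(t)).  Index 0 stands for the source, which never
  constrains link 1; its weight is taken to be 0.\<close>
definition V :: "nat \<Rightarrow> nat \<Rightarrow> (nat \<times> nat \<Rightarrow> bool) \<Rightarrow> real" where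
  "V k t \<omega> = (if k = 0 then 0 else y ^ Z \<omega> t * u ^ rank \<omega> t k)"

lemma V_nonneg: "0 \<le> V k t \<omega>"
  using y_gt1 u_pos by (simp add: V_def)

lemma V_0: "k \<noteq> 0 \<Longrightarrow> V k 0 \<omega> = 1"
  by (simp add: V_def)

lemma depends_on_V_weighted:
  "k \<le> l \<Longrightarrow> depends_on (window l t) (\<lambda>\<omega>. f (Z \<omega> t) * V k t \<omega>)"
  unfolding V_def
  by (rule depends_on_state[where f="\<lambda>a b. f a * (if k = 0 then 0 else y ^ a * u ^ b)"])
    (use m_le in auto)

lemma depends_on_V: "k \<le> l \<Longrightarrow> depends_on (window l t) (V k t)"
  using depends_on_V_weighted[of k t "\<lambda>_. 1"] by simp

lemma integrable_V: "k \<le> l \<Longrightarrow> integrable M (V k t)"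
  by (rule integrable_window[OF depends_on_V])

lemma V_eq_lag: "m \<le> k \<Longrightarrow> k \<le> l \<Longrightarrow> V k t \<omega> = y ^ (Z \<omega> t - rank \<omega> t k)"
proof -
  assume k: "m \<le> k" "k \<le> l"
  have "rank \<omega> t k \<le> rank \<omega> t m" using k m_ge by (intro rk_antimono_line)
  then have le: "rank \<omega> t k \<le> Z \<omega> t" using rk_le_succ_count[of \<infinity> \<omega> t m] by linarith
  define d where "d = Z \<omega> t - rank \<omega> t k"
  have "V k t \<omega> = y ^ d * (y * u) ^ rank \<omega> t k"
    using k m_ge le by (simp add: V_def d_def power_add[symmetric] power_mult_distrib)
  then show ?thesis by (simp add: y_times_u d_def)
qed

text \<open>One step on a fast link k: if node k+1 can forward, its rank grows with the success of
  link k (factor u); if it is starved, it equals the rank of node k, so V k = V (k-1).\<close>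
lemma V_step_fast:
  assumes k: "1 \<le> k" "k \<noteq> m"
  shows "V k (Suc t) \<omega> \<le> (if \<omega> (Suc t, m) then y else 1) *
            ((if \<omega> (Suc t, k) then u else 1) * V k t \<omega> + V (k - 1) t \<omega>)"
proof -
  define r where "r = rank \<omega> t k"
  define gy where "gy = (if \<omega> (Suc t, m) then y else 1)"
  define gk where "gk = (if \<omega> (Suc t, k) then u else 1)"
  have gy0: "0 \<le> gy" using y_gt1 by (simp add: gy_def)
  have gk0: "0 \<le> gk" using u_pos by (simp add: gk_def)
  have zS: "y ^ Z \<omega> (Suc t) = y ^ Z \<omega> t * gy" by (simp add: gy_def)
  have Vk: "V k t \<omega> = y ^ Z \<omega> t * u ^ r" using k by (simp add: V_def r_def)
  show ?thesis
  proof (cases "(if k \<le> 1 then \<infinity> else enat (rank \<omega> t (k - 1))) > enat r")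
    case True
    then have "rank \<omega> (Suc t) k = r + (if \<omega> (Suc t, k) then 1 else 0)"
      by (simp add: r_def)
    then have "u ^ rank \<omega> (Suc t) k = u ^ r * gk" by (simp add: gk_def)
    then have "V k (Suc t) \<omega> = gy * (gk * V k t \<omega>)" using k zS by (simp add: V_def r_def)
    also have "\<dots> \<le> gy * (gk * V k t \<omega> + V (k - 1) t \<omega>)"
      using gy0 V_nonneg by (intro mult_left_mono) auto
    finally show ?thesis by (simp add: gy_def gk_def)
  next
    case False
    then have k2: "\<not> k \<le> 1" by auto
    then have "rank \<omega> t (k - 1) \<le> r" using False by (auto simp: r_def)
    moreover have "r \<le> rank \<omega> t (k - 1)" unfolding r_def using k2 by (intro rk_le_pred) auto
    ultimately have starved: "rank \<omega> t (k - 1) = r" by simp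
    have "rank \<omega> (Suc t) k = r" using False by (simp add: r_def)
    then have "V k (Suc t) \<omega> = gy * V (k - 1) t \<omega>" using k k2 zS starved by (simp add: V_def)
    also have "\<dots> \<le> gy * (gk * V k t \<omega> + V (k - 1) t \<omega>)"
      using gy0 gk0 V_nonneg by (intro mult_left_mono) auto
    finally show ?thesis by (simp add: gy_def gk_def)
  qed
qed

text \<open>One step on the bottleneck: a success of link m either also moves a packet over
  it (y u = 1, no change) or finds node m+1 starved, in which case V m = V (m-1).\<close>
lemma V_step_bottleneck:
  "V m (Suc t) \<omega> \<le> V m t \<omega> + ((if \<omega> (Suc t, m) then y else 1) - 1) * V (m - 1) t \<omega>"
proof -
  define r where "r = rank \<omega> t m"
  define gy where "gy = (if \<omega> (Suc t, m) then y else 1)"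
  have gy1: "1 \<le> gy" using y_gt1 by (simp add: gy_def)
  have zS: "y ^ Z \<omega> (Suc t) = y ^ Z \<omega> t * gy" by (simp add: gy_def)
  have Vm: "V m t \<omega> = y ^ Z \<omega> t * u ^ r" using m_ge by (simp add: V_def r_def)
  show ?thesis
  proof (cases "(if m \<le> 1 then \<infinity> else enat (rank \<omega> t (m - 1))) > enat r")
    case True
    then have "rank \<omega> (Suc t) m = r + (if \<omega> (Suc t, m) then 1 else 0)"
      by (simp add: r_def)
    then have "V m (Suc t) \<omega> = y ^ Z \<omega> t * u ^ r * (if \<omega> (Suc t, m) then y * u else 1)"
      using m_ge zS by (simp add: V_def gy_def)
    also have "\<dots> = V m t \<omega>" using y_times_u Vm by simp
    also have "\<dots> \<le> V m t \<omega> + (gy - 1) * V (m - 1) t \<omega>"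
      using gy1 V_nonneg by simp
    finally show ?thesis by (simp add: gy_def)
  next
    case False
    then have m2: "\<not> m \<le> 1" by auto
    then have "rank \<omega> t (m - 1) \<le> r" using False by (auto simp: r_def)
    moreover have "r \<le> rank \<omega> t (m - 1)" unfolding r_def using m2 by (intro rk_le_pred) auto
    ultimately have starved: "rank \<omega> t (m - 1) = r" by simp
    have rkS: "rank \<omega> (Suc t) m = r" using False by (simp add: r_def)
    have Vm1: "V (m - 1) t \<omega> = y ^ Z \<omega> t * u ^ r" using starved m2 by (simp add: V_def)
    have "V m (Suc t) \<omega> = gy * V m t \<omega>"
      using m_ge zS rkS by (simp del: rk.simps succ_count.simps add: V_def r_def)
    also have "gy * V m t \<omega> = V m t \<omega> + (gy - 1) * V (m - 1) t \<omega>"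
      using Vm Vm1 by (simp add: algebra_simps)
    finally show ?thesis by (simp add: gy_def)
  qed
qed

lemma V_bottleneck_mono: "t \<le> t' \<Longrightarrow> V m t \<omega> \<le> V m t' \<omega>"
  unfolding V_eq_lag[OF order.refl m_le] using y_gt1
  by (intro power_increasing lag_mono) auto

subsection \<open>Expected Lyapunov functions are bounded\<close>

definition EV :: "nat \<Rightarrow> nat \<Rightarrow> real" where
  "EV k t = (\<integral>\<omega>. V k t \<omega> \<partial>M)"

lemma EV_nonneg: "0 \<le> EV k t"
  unfolding EV_def by (rule integral_nonneg_AE) (simp add: V_nonneg)

lemma EV_0: "k \<noteq> 0 \<Longrightarrow> EV k 0 = 1"
  using prob_space.prob_space[OF prob_space_erasure_space] by (simp add: EV_def V_0)

lemma EV_source: "EV 0 t = 0"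
  by (simp add: EV_def V_def)

lemma EV_step_fast:
  assumes k: "k \<in> {1..l}" "k \<noteq> m"
  shows "EV k (Suc t) \<le> Phi * EV k t + Ey * EV (k - 1) t"
proof -
  define gy where "gy = (\<lambda>b. if b then y else (1::real))"
  define gk where "gk = (\<lambda>b. if b then u else (1::real))"
  have kl: "k \<le> l" "k - 1 \<le> l" using k by auto
  have dk: "depends_on (window l t) (V k t)" and dk1: "depends_on (window l t) (V (k - 1) t)"
    using kl by (simp_all add: depends_on_V)
  let ?F1 = "\<lambda>\<omega>. V k t \<omega> * gy (\<omega> (Suc t, m)) * gk (\<omega> (Suc t, k))"
  let ?F2 = "\<lambda>\<omega>. V (k - 1) t \<omega> * gy (\<omega> (Suc t, m))"
  have i1: "integrable M ?F1" by (rule integrable_times_links[OF dk kl(1)])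
  have i2: "integrable M ?F2" by (rule integrable_times_link[OF dk1 m_le])
  have "EV k (Suc t) \<le> (\<integral>\<omega>. ?F1 \<omega> + ?F2 \<omega> \<partial>M)"
    unfolding EV_def
  proof (rule integral_mono)
    show "integrable M (V k (Suc t))" using kl(1) by (rule integrable_V)
    show "integrable M (\<lambda>\<omega>. ?F1 \<omega> + ?F2 \<omega>)" using i1 i2 by simp
    fix \<omega> show "V k (Suc t) \<omega> \<le> ?F1 \<omega> + ?F2 \<omega>"
      using V_step_fast[of k t \<omega>] k by (simp add: gy_def gk_def algebra_simps)
  qed
  also have "\<dots> = Ey * psi k * EV k t + Ey * EV (k - 1) t"
    using i1 i2 expectation_times_links[OF dk k, of gy gk] expectation_times_link_m[OF dk1, of gy]
    by (simp add: EV_def gy_def gk_def Ey_eq psi_def algebra_simps)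
  finally show ?thesis
    using mult_right_mono[OF Ey_psi_le_Phi[OF k] EV_nonneg, of k t] by simp
qed

lemma EV_step_bottleneck: "EV m (Suc t) \<le> EV m t + (Ey - 1) * EV (m - 1) t"
proof -
  define g where "g = (\<lambda>b. (if b then y else 1) - (1::real))"
  have d: "depends_on (window l t) (V (m - 1) t)" using m_le by (intro depends_on_V) auto
  have i: "integrable M (\<lambda>\<omega>. V (m - 1) t \<omega> * g (\<omega> (Suc t, m)))"
    by (rule integrable_times_link[OF d m_le])
  have "EV m (Suc t) \<le> (\<integral>\<omega>. V m t \<omega> + V (m - 1) t \<omega> * g (\<omega> (Suc t, m)) \<partial>M)"
    unfolding EV_def
  proof (rule integral_mono)
    show "integrable M (V m (Suc t))" using m_le by (rule integrable_V)
    show "integrable M (\<lambda>\<omega>. V m t \<omega> + V (m - 1) t \<omega> * g (\<omega> (Suc t, m)))"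
      using i integrable_V[OF m_le] by simp
    fix \<omega> show "V m (Suc t) \<omega> \<le> V m t \<omega> + V (m - 1) t \<omega> * g (\<omega> (Suc t, m))"
      using V_step_bottleneck[of t \<omega>] by (simp add: g_def algebra_simps)
  qed
  also have "\<dots> = EV m t + (\<integral>\<omega>. V (m - 1) t \<omega> * g (\<omega> (Suc t, m)) \<partial>M)"
    using i integrable_V[OF m_le] by (simp add: EV_def)
  also have "(\<integral>\<omega>. V (m - 1) t \<omega> * g (\<omega> (Suc t, m)) \<partial>M) = (Ey - 1) * EV (m - 1) t"
    using expectation_times_link_m[OF d, of g] by (simp add: EV_def g_def Ey_def y_def)
  finally show ?thesis .
qed

primrec upstream_bound :: "nat \<Rightarrow> real" where
  "upstream_bound 0 = 0"
| "upstream_bound (Suc k) = (1 + Ey * upstream_bound k) / (1 - Phi)"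

lemma upstream_bound_nonneg: "0 \<le> upstream_bound k"
proof (induction k)
  case (Suc k)
  then have "0 \<le> 1 + Ey * upstream_bound k" using Ey_ge1 by simp
  then show ?case using Phi_lt1 by simp
qed simp

lemma EV_sum_upstream: "k < m \<Longrightarrow> (\<Sum>t<TT. EV k t) \<le> upstream_bound k"
proof (induction k arbitrary: TT)
  case 0 then show ?case by (simp add: EV_source)
next
  case (Suc k)
  let ?S = "\<Sum>t<TT. EV (Suc k) t" and ?S' = "\<Sum>t<TT. EV k t"
  have k: "Suc k \<in> {1..l}" "Suc k \<noteq> m" using Suc.prems m_le by auto
  have "?S + EV (Suc k) TT = EV (Suc k) 0 + (\<Sum>t<TT. EV (Suc k) (Suc t))"
    using sum.lessThan_Suc_shift[of "EV (Suc k)" TT] by simp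
  moreover have "(\<Sum>t<TT. EV (Suc k) (Suc t)) \<le> Phi * ?S + Ey * ?S'"
  proof -
    have "(\<Sum>t<TT. EV (Suc k) (Suc t)) \<le> (\<Sum>t<TT. Phi * EV (Suc k) t + Ey * EV k t)"
      using EV_step_fast[OF k] by (intro sum_mono) simp
    then show ?thesis by (simp only: sum.distrib sum_distrib_left)
  qed
  ultimately have "(1 - Phi) * ?S \<le> 1 + Ey * ?S'"
    using EV_0[of "Suc k"] EV_nonneg[of "Suc k" TT] by (simp add: left_diff_distrib)
  also have "\<dots> \<le> 1 + Ey * upstream_bound k"
    using Suc.IH Suc.prems Ey_ge1 by simp
  finally show ?case using Phi_lt1 by (simp add: pos_le_divide_eq mult.commute)
qed

definition bottleneck_bound :: real where
  "bottleneck_bound = 1 + (Ey - 1) * upstream_bound (m - 1)"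

lemma EV_bottleneck: "EV m t \<le> bottleneck_bound"
proof -
  have "EV m t \<le> 1 + (Ey - 1) * (\<Sum>s<t. EV (m - 1) s)"
  proof (induction t)
    case 0 then show ?case using m_ge by (simp add: EV_0)
  next
    case (Suc t)
    have "EV m (Suc t) \<le> EV m t + (Ey - 1) * EV (m - 1) t" by (rule EV_step_bottleneck)
    also have "\<dots> \<le> 1 + (Ey - 1) * (\<Sum>s<t. EV (m - 1) s) + (Ey - 1) * EV (m - 1) t"
      using Suc by simp
    finally show ?case by (simp add: distrib_left)
  qed
  also have "\<dots> \<le> bottleneck_bound"
    unfolding bottleneck_bound_def using EV_sum_upstream[of "m - 1" t] m_ge Ey_ge1
    by (intro add_left_mono mult_left_mono) auto
  finally show ?thesis .
qed

primrec downstream_bound :: "nat \<Rightarrow> real" where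
  "downstream_bound 0 = bottleneck_bound"
| "downstream_bound (Suc j) = 1 + Ey * downstream_bound j / (1 - Phi)"

lemma downstream_bound_ge1: "1 \<le> downstream_bound j"
  using upstream_bound_nonneg Ey_ge1 Phi_lt1 by (induction j) (auto simp: bottleneck_bound_def)

lemma EV_downstream: "m + j \<le> l \<Longrightarrow> EV (m + j) t \<le> downstream_bound j"
proof (induction j arbitrary: t)
  case 0 then show ?case using EV_bottleneck by simp
next
  case (Suc j)
  let ?B = "downstream_bound (Suc j)" and ?b = "downstream_bound j"
  have k: "m + Suc j \<in> {1..l}" "m + Suc j \<noteq> m" using Suc.prems m_ge by auto
  have upstream: "EV (m + j) t' \<le> ?b" for t' using Suc by simp
  have fixed_point: "Phi * ?B + Ey * ?b = ?B - (1 - Phi)"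
    using Phi_lt1 by (simp add: field_simps)
  show ?case
  proof (induction t)
    case 0 then show ?case using downstream_bound_ge1[of "Suc j"] k by (simp add: EV_0)
  next
    case (Suc t)
    have "EV (m + Suc j) (Suc t) \<le> Phi * EV (m + Suc j) t + Ey * EV (m + j) t"
      using EV_step_fast[OF k, of t] by simp
    also have "\<dots> \<le> Phi * ?B + Ey * ?b"
      using Suc.IH upstream[of t] Phi_nonneg Ey_ge1 by (intro add_mono mult_left_mono) auto
    finally show ?case using fixed_point Phi_lt1 by simp
  qed
qed

subsection \<open>First claim: the throughput deficit is bounded\<close>

text \<open>The last node lies behind the bottleneck, so R_t <= Z_t.\<close>
lemma rk_last_le_Z: "rk s (curry \<omega>) t l \<le> Z \<omega> t"
  using rk_antimono_line[OF m_ge m_le, of s "curry \<omega>" t] rk_le_succ_count[of s \<omega> t m] by linarith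

text \<open>Bernoulli's inequality turns the exponential weight into a linear bound on the lag.\<close>
lemma lag_le_V: "real (Z \<omega> t) - real (rank \<omega> t l) \<le> V l t \<omega> / delta"
proof -
  define d where "d = Z \<omega> t - rank \<omega> t l"
  have "1 + real d * delta \<le> (1 + delta) ^ d" using delta_pos by (intro Bernoulli_inequality) simp
  then have "real d \<le> V l t \<omega> / delta" using delta_pos
    by (simp add: V_eq_lag[OF m_le order.refl] d_def y_def pos_le_divide_eq)
  then show ?thesis using rk_last_le_Z[of \<infinity> \<omega> t] by (simp add: d_def of_nat_diff)
qed

theorem throughput_deficit:
  "\<bar>A * real t - (\<integral>\<omega>. real (R l \<infinity> t \<omega>) \<partial>M)\<bar> \<le> downstream_bound (l - m) / delta"
proof -
  have iR: "integrable M (\<lambda>\<omega>. real (rank \<omega> t l))" by (rule integrable_window[OF depends_on_rank])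
  have iZ: "integrable M (\<lambda>\<omega>. real (Z \<omega> t))" by (rule integrable_window[OF depends_on_Z])
  have eq: "A * real t - (\<integral>\<omega>. real (R l \<infinity> t \<omega>) \<partial>M) =
      (\<integral>\<omega>. real (Z \<omega> t) - real (rank \<omega> t l) \<partial>M)"
    using iR iZ by (simp add: expectation_Z[symmetric] R_def)
  have ge: "0 \<le> (\<integral>\<omega>. real (Z \<omega> t) - real (rank \<omega> t l) \<partial>M)"
    by (rule integral_nonneg_AE) (simp add: rk_last_le_Z)
  have "(\<integral>\<omega>. real (Z \<omega> t) - real (rank \<omega> t l) \<partial>M) \<le> (\<integral>\<omega>. V l t \<omega> / delta \<partial>M)"
    by (rule integral_mono) (use iR iZ integrable_V[of l t] lag_le_V in auto)
  also have "\<dots> = EV l t / delta" by (simp add: EV_def)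
  also have "\<dots> \<le> downstream_bound (l - m) / delta"
    using EV_downstream[of "l - m" t] m_le delta_pos by (simp add: divide_right_mono)
  finally show ?thesis using eq ge by simp
qed

subsection \<open>Palm sums: time spent by the bottleneck counter at a given level\<close>

text \<open>visits k N TT is the expected weight V k accumulated during the times t < TT at
  which Z_t = N; visits_before counts the times at which Z_t = N - 1.  Both are bounded
  uniformly in N and TT: Z leaves each level after a geometric number of steps.\<close>
definition visits :: "nat \<Rightarrow> nat \<Rightarrow> nat \<Rightarrow> real" where
  "visits k N TT = (\<Sum>t<TT. \<integral>\<omega>. of_bool (Z \<omega> t = N) * V k t \<omega> \<partial>M)"

definition visits_before :: "nat \<Rightarrow> nat \<Rightarrow> nat \<Rightarrow> real" where
  "visits_before k N TT = (\<Sum>t<TT. \<integral>\<omega>. of_bool (Z \<omega> t + 1 = N) * V k t \<omega> \<partial>M)"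

lemma visits_before_0: "visits_before k 0 TT = 0"
  by (simp add: visits_before_def)

lemma visits_before_Suc: "visits_before k (Suc N) TT = visits k N TT"
  by (simp add: visits_before_def visits_def)

lemma depends_on_visit: "k \<le> l \<Longrightarrow> depends_on (window l t) (\<lambda>\<omega>. of_bool (P (Z \<omega> t)) * V k t \<omega>)"
  by (rule depends_on_V_weighted)

lemma visits_mono: "visits k N TT \<le> visits k N (Suc TT)"
proof -
  have "0 \<le> (\<integral>\<omega>. of_bool (Z \<omega> TT = N) * V k TT \<omega> \<partial>M)"
    by (intro integral_nonneg_AE) (simp add: V_nonneg)
  then show ?thesis by (simp add: visits_def)
qed

text \<open>Splitting off time 0, where V = 1 and the contribution is a probability.\<close>
lemma visits_Suc_le:
  assumes "k \<noteq> 0"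
  shows "visits k N (Suc TT) \<le>
    1 + (\<Sum>t<TT. \<integral>\<omega>. of_bool (Z \<omega> (Suc t) = N) * V k (Suc t) \<omega> \<partial>M)"
proof -
  interpret prob_space M by (rule prob_space_erasure_space)
  have "(\<integral>\<omega>. of_bool (Z \<omega> 0 = N) * V k 0 \<omega> \<partial>M) \<le> 1"
    using assms prob_space by (simp add: V_0)
  then show ?thesis unfolding visits_def sum.lessThan_Suc_shift by simp
qed

text \<open>Pointwise one-step bound on a fast link, split according to whether the bottleneck
  succeeds (Z moves to the next level) or not.\<close>
lemma visit_step_fast_pointwise:
  assumes k: "1 \<le> k" "k \<noteq> m"
  shows "of_bool (Z \<omega> (Suc t) = N) * V k (Suc t) \<omega> \<le>
     of_bool (Z \<omega> t = N) * V k t \<omega> * (if \<omega> (Suc t, m) then 0 else 1) * (if \<omega> (Suc t, k) then u else 1)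
   + of_bool (Z \<omega> t = N) * V (k - 1) t \<omega> * (if \<omega> (Suc t, m) then 0 else 1)
   + of_bool (Z \<omega> t + 1 = N) * V k t \<omega> * (if \<omega> (Suc t, m) then y else 0) * (if \<omega> (Suc t, k) then u else 1)
   + of_bool (Z \<omega> t + 1 = N) * V (k - 1) t \<omega> * (if \<omega> (Suc t, m) then y else 0)"
proof -
  let ?gk = "if \<omega> (Suc t, k) then u else 1"
  have step: "V k (Suc t) \<omega> \<le> (if \<omega> (Suc t, m) then y else 1) * (?gk * V k t \<omega> + V (k - 1) t \<omega>)"
    by (rule V_step_fast[OF k])
  show ?thesis
  proof (cases "\<omega> (Suc t, m)")
    case True
    have "V k (Suc t) \<omega> \<le> y * (?gk * V k t \<omega> + V (k - 1) t \<omega>)" using step True by simp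
    then have "of_bool (Z \<omega> t + 1 = N) * V k (Suc t) \<omega> \<le>
        of_bool (Z \<omega> t + 1 = N) * (y * (?gk * V k t \<omega> + V (k - 1) t \<omega>))"
      by (rule mult_left_mono) simp
    then show ?thesis using True by (simp add: algebra_simps)
  next
    case False
    have "V k (Suc t) \<omega> \<le> ?gk * V k t \<omega> + V (k - 1) t \<omega>" using step False by simp
    then have "of_bool (Z \<omega> t = N) * V k (Suc t) \<omega> \<le>
        of_bool (Z \<omega> t = N) * (?gk * V k t \<omega> + V (k - 1) t \<omega>)"
      by (rule mult_left_mono) simp
    then show ?thesis using False by (simp add: algebra_simps)
  qed
qed

lemma expected_visit_step_fast:
  assumes k: "k \<in> {1..l}" "k \<noteq> m"
  shows "(\<integral>\<omega>. of_bool (Z \<omega> (Suc t) = N) * V k (Suc t) \<omega> \<partial>M) \<le>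
     (1 - A) * psi k * (\<integral>\<omega>. of_bool (Z \<omega> t = N) * V k t \<omega> \<partial>M)
   + (1 - A) * (\<integral>\<omega>. of_bool (Z \<omega> t = N) * V (k - 1) t \<omega> \<partial>M)
   + A * y * psi k * (\<integral>\<omega>. of_bool (Z \<omega> t + 1 = N) * V k t \<omega> \<partial>M)
   + A * y * (\<integral>\<omega>. of_bool (Z \<omega> t + 1 = N) * V (k - 1) t \<omega> \<partial>M)"
proof -
  define g0 where "g0 = (\<lambda>b. if b then 0 else (1::real))"
  define g1 where "g1 = (\<lambda>b. if b then y else (0::real))"
  define gk where "gk = (\<lambda>b. if b then u else (1::real))"
  have kl: "k \<le> l" "k - 1 \<le> l" using k by auto
  have d1: "depends_on (window l t) (\<lambda>\<omega>. of_bool (Z \<omega> t = N) * V k t \<omega>)"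
    and d2: "depends_on (window l t) (\<lambda>\<omega>. of_bool (Z \<omega> t = N) * V (k - 1) t \<omega>)"
    and d3: "depends_on (window l t) (\<lambda>\<omega>. of_bool (Z \<omega> t + 1 = N) * V k t \<omega>)"
    and d4: "depends_on (window l t) (\<lambda>\<omega>. of_bool (Z \<omega> t + 1 = N) * V (k - 1) t \<omega>)"
    using depends_on_visit[OF kl(1), of t "\<lambda>z. z = N"] depends_on_visit[OF kl(2), of t "\<lambda>z. z = N"]
      depends_on_visit[OF kl(1), of t "\<lambda>z. z + 1 = N"] depends_on_visit[OF kl(2), of t "\<lambda>z. z + 1 = N"]
    by simp_all
  let ?f1 = "\<lambda>\<omega>. of_bool (Z \<omega> t = N) * V k t \<omega> * g0 (\<omega> (Suc t, m)) * gk (\<omega> (Suc t, k))"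
  let ?f2 = "\<lambda>\<omega>. of_bool (Z \<omega> t = N) * V (k - 1) t \<omega> * g0 (\<omega> (Suc t, m))"
  let ?f3 = "\<lambda>\<omega>. of_bool (Z \<omega> t + 1 = N) * V k t \<omega> * g1 (\<omega> (Suc t, m)) * gk (\<omega> (Suc t, k))"
  let ?f4 = "\<lambda>\<omega>. of_bool (Z \<omega> t + 1 = N) * V (k - 1) t \<omega> * g1 (\<omega> (Suc t, m))"
  have i1: "integrable M ?f1" by (rule integrable_times_links[OF d1 kl(1)])
  have i2: "integrable M ?f2" by (rule integrable_times_link[OF d2 m_le])
  have i3: "integrable M ?f3" by (rule integrable_times_links[OF d3 kl(1)])
  have i4: "integrable M ?f4" by (rule integrable_times_link[OF d4 m_le])
  have "(\<integral>\<omega>. of_bool (Z \<omega> (Suc t) = N) * V k (Suc t) \<omega> \<partial>M) \<le>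
        (\<integral>\<omega>. ?f1 \<omega> + ?f2 \<omega> + ?f3 \<omega> + ?f4 \<omega> \<partial>M)"
  proof (rule integral_mono)
    show "integrable M (\<lambda>\<omega>. of_bool (Z \<omega> (Suc t) = N) * V k (Suc t) \<omega>)"
      using integrable_window[OF depends_on_visit[OF kl(1), of "Suc t" "\<lambda>x. x = N"]] .
    show "integrable M (\<lambda>\<omega>. ?f1 \<omega> + ?f2 \<omega> + ?f3 \<omega> + ?f4 \<omega>)" using i1 i2 i3 i4 by simp
    fix \<omega> show "of_bool (Z \<omega> (Suc t) = N) * V k (Suc t) \<omega> \<le> ?f1 \<omega> + ?f2 \<omega> + ?f3 \<omega> + ?f4 \<omega>"
      using visit_step_fast_pointwise[of k \<omega> t N] k by (simp add: g0_def g1_def gk_def)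
  qed
  also have "\<dots> = (\<integral>\<omega>. ?f1 \<omega> \<partial>M) + (\<integral>\<omega>. ?f2 \<omega> \<partial>M) + (\<integral>\<omega>. ?f3 \<omega> \<partial>M) + (\<integral>\<omega>. ?f4 \<omega> \<partial>M)"
    using i1 i2 i3 i4 by simp
  also have "(\<integral>\<omega>. ?f1 \<omega> \<partial>M) = (1 - A) * psi k * (\<integral>\<omega>. of_bool (Z \<omega> t = N) * V k t \<omega> \<partial>M)"
    using expectation_times_links[OF d1 k, of g0 gk] by (simp add: g0_def gk_def psi_def algebra_simps)
  also have "(\<integral>\<omega>. ?f2 \<omega> \<partial>M) = (1 - A) * (\<integral>\<omega>. of_bool (Z \<omega> t = N) * V (k - 1) t \<omega> \<partial>M)"
    using expectation_times_link_m[OF d2, of g0] by (simp add: g0_def algebra_simps)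
  also have "(\<integral>\<omega>. ?f3 \<omega> \<partial>M) = A * y * psi k * (\<integral>\<omega>. of_bool (Z \<omega> t + 1 = N) * V k t \<omega> \<partial>M)"
    using expectation_times_links[OF d3 k, of g1 gk] by (simp add: g1_def gk_def psi_def algebra_simps)
  also have "(\<integral>\<omega>. ?f4 \<omega> \<partial>M) = A * y * (\<integral>\<omega>. of_bool (Z \<omega> t + 1 = N) * V (k - 1) t \<omega> \<partial>M)"
    using expectation_times_link_m[OF d4, of g1] by (simp add: g1_def algebra_simps)
  finally show ?thesis .
qed

lemma visits_step_fast:
  assumes k: "k \<in> {1..l}" "k \<noteq> m"
  shows "visits k N (Suc TT) \<le> 1 + (1 - A) * psi k * visits k N TT + (1 - A) * visits (k - 1) N TT
           + A * y * psi k * visits_before k N TT + A * y * visits_before (k - 1) N TT"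
proof -
  have "(\<Sum>t<TT. \<integral>\<omega>. of_bool (Z \<omega> (Suc t) = N) * V k (Suc t) \<omega> \<partial>M) \<le>
     (\<Sum>t<TT. (1 - A) * psi k * (\<integral>\<omega>. of_bool (Z \<omega> t = N) * V k t \<omega> \<partial>M)
   + (1 - A) * (\<integral>\<omega>. of_bool (Z \<omega> t = N) * V (k - 1) t \<omega> \<partial>M)
   + A * y * psi k * (\<integral>\<omega>. of_bool (Z \<omega> t + 1 = N) * V k t \<omega> \<partial>M)
   + A * y * (\<integral>\<omega>. of_bool (Z \<omega> t + 1 = N) * V (k - 1) t \<omega> \<partial>M))"
    by (intro sum_mono expected_visit_step_fast[OF k])
  also have "\<dots> = (1 - A) * psi k * visits k N TT + (1 - A) * visits (k - 1) N TT
           + A * y * psi k * visits_before k N TT + A * y * visits_before (k - 1) N TT"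
    unfolding visits_def visits_before_def by (simp only: sum.distrib sum_distrib_left)
  finally show ?thesis using visits_Suc_le[of k N TT] k by simp
qed

text \<open>At the bottleneck V m is nondecreasing, so the weight collected at level N is at most
  V m at the time Z leaves level N; each step at level N is repeated with probability 1 - A.\<close>
lemma visit_step_bottleneck_pointwise:
  assumes "t < TT"
  shows "of_bool (Z \<omega> (Suc t) = N) * V m (Suc t) \<omega> \<le>
     of_bool (Z \<omega> t = N) * V m t \<omega> * (if \<omega> (Suc t, m) then 0 else 1)
   + (of_bool (Z \<omega> t < N) - of_bool (Z \<omega> (Suc t) < N)) * V m TT \<omega>"
proof (cases "\<omega> (Suc t, m)")
  case True
  have "V m (Suc t) \<omega> \<le> V m TT \<omega>" using assms by (intro V_bottleneck_mono) simp
  then have "of_bool (Z \<omega> (Suc t) = N) * V m (Suc t) \<omega> \<le> of_bool (Z \<omega> (Suc t) = N) * V m TT \<omega>"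
    by (rule mult_left_mono) simp
  moreover have "of_bool (Z \<omega> (Suc t) = N) = (of_bool (Z \<omega> t < N) - of_bool (Z \<omega> (Suc t) < N) :: real)"
    using True by auto
  ultimately show ?thesis using True by simp
next
  case False
  have "V m (Suc t) \<omega> \<le> V m t \<omega>" using V_step_bottleneck[of t \<omega>] False by simp
  then show ?thesis using False by (simp add: mult_left_mono)
qed

lemma visits_bottleneck_pointwise:
  "(\<Sum>t<TT. of_bool (Z \<omega> (Suc t) = N) * V m (Suc t) \<omega>) \<le>
   (\<Sum>t<TT. of_bool (Z \<omega> t = N) * V m t \<omega> * (if \<omega> (Suc t, m) then 0 else 1)) + V m TT \<omega>"
proof -
  have "(\<Sum>t<TT. of_bool (Z \<omega> t < N) - of_bool (Z \<omega> (Suc t) < N)) =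
      of_bool (Z \<omega> 0 < N) - (of_bool (Z \<omega> TT < N) :: real)"
    by (rule sum_lessThan_telescope')
  then have telescope:
    "(\<Sum>t<TT. of_bool (Z \<omega> t < N) - of_bool (Z \<omega> (Suc t) < N)) * V m TT \<omega> \<le> V m TT \<omega>"
    using V_nonneg[of m TT \<omega>] by (simp del: succ_count.simps)
  have "(\<Sum>t<TT. of_bool (Z \<omega> (Suc t) = N) * V m (Suc t) \<omega>) \<le>
     (\<Sum>t<TT. of_bool (Z \<omega> t = N) * V m t \<omega> * (if \<omega> (Suc t, m) then 0 else 1)
       + (of_bool (Z \<omega> t < N) - of_bool (Z \<omega> (Suc t) < N)) * V m TT \<omega>)"
    by (intro sum_mono visit_step_bottleneck_pointwise) simp
  also have "\<dots> = (\<Sum>t<TT. of_bool (Z \<omega> t = N) * V m t \<omega> * (if \<omega> (Suc t, m) then 0 else 1))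
       + (\<Sum>t<TT. of_bool (Z \<omega> t < N) - of_bool (Z \<omega> (Suc t) < N)) * V m TT \<omega>"
    by (simp add: sum.distrib sum_distrib_right)
  finally show ?thesis using telescope by simp
qed

lemma visits_bottleneck: "visits m N TT \<le> (1 + bottleneck_bound) / A"
proof -
  define g0 where "g0 = (\<lambda>b. if b then 0 else (1::real))"
  have d: "depends_on (window l t) (\<lambda>\<omega>. of_bool (Z \<omega> t = N) * V m t \<omega>)" for t
    using depends_on_visit[OF m_le, of t "\<lambda>z. z = N"] by simp
  have iL: "integrable M (\<lambda>\<omega>. of_bool (Z \<omega> (Suc t) = N) * V m (Suc t) \<omega>)" for t
    by (rule integrable_window[OF d])
  have iR: "integrable M (\<lambda>\<omega>. of_bool (Z \<omega> t = N) * V m t \<omega> * g0 (\<omega> (Suc t, m)))" for t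
    by (rule integrable_times_link[OF d m_le])
  have stay: "(\<integral>\<omega>. of_bool (Z \<omega> t = N) * V m t \<omega> * g0 (\<omega> (Suc t, m)) \<partial>M) =
      (1 - A) * (\<integral>\<omega>. of_bool (Z \<omega> t = N) * V m t \<omega> \<partial>M)" for t
    using expectation_times_link_m[OF d, of t g0] by (simp add: g0_def)
  have "(\<Sum>t<TT. \<integral>\<omega>. of_bool (Z \<omega> (Suc t) = N) * V m (Suc t) \<omega> \<partial>M)
      = (\<integral>\<omega>. (\<Sum>t<TT. of_bool (Z \<omega> (Suc t) = N) * V m (Suc t) \<omega>) \<partial>M)"
    by (intro Bochner_Integration.integral_sum[symmetric] iL)
  also have "\<dots> \<le> (\<integral>\<omega>. (\<Sum>t<TT. of_bool (Z \<omega> t = N) * V m t \<omega> * g0 (\<omega> (Suc t, m))) + V m TT \<omega> \<partial>M)"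
  proof (rule integral_mono)
    show "integrable M (\<lambda>\<omega>. \<Sum>t<TT. of_bool (Z \<omega> (Suc t) = N) * V m (Suc t) \<omega>)"
      by (intro Bochner_Integration.integrable_sum iL)
    show "integrable M (\<lambda>\<omega>. (\<Sum>t<TT. of_bool (Z \<omega> t = N) * V m t \<omega> * g0 (\<omega> (Suc t, m))) + V m TT \<omega>)"
      using iR integrable_V[OF m_le] by simp
    fix \<omega> show "(\<Sum>t<TT. of_bool (Z \<omega> (Suc t) = N) * V m (Suc t) \<omega>) \<le>
        (\<Sum>t<TT. of_bool (Z \<omega> t = N) * V m t \<omega> * g0 (\<omega> (Suc t, m))) + V m TT \<omega>"
      using visits_bottleneck_pointwise[of \<omega> N TT] by (simp add: g0_def)
  qed
  also have "\<dots> = (\<Sum>t<TT. \<integral>\<omega>. of_bool (Z \<omega> t = N) * V m t \<omega> * g0 (\<omega> (Suc t, m)) \<partial>M) + EV m TT"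
    using iR integrable_V[OF m_le] by (simp add: Bochner_Integration.integral_sum EV_def)
  also have "\<dots> = (1 - A) * visits m N TT + EV m TT"
    by (simp add: stay visits_def sum_distrib_left)
  finally have "visits m N TT \<le> 1 + (1 - A) * visits m N TT + bottleneck_bound"
    using visits_mono[of m N TT] visits_Suc_le[of m N TT] m_ge EV_bottleneck[of TT] by linarith
  then have "A * visits m N TT \<le> 1 + bottleneck_bound" by (simp add: algebra_simps)
  then show ?thesis using A_pos by (simp add: pos_le_divide_eq mult.commute)
qed

text \<open>The recursion of visits_step_fast closes at the level H = (1 + Ey B) / (1 - Phi)
  once the upstream terms are bounded by B and the level below N by H.\<close>
lemma visit_recursion_closes:
  assumes k: "k \<in> {1..l}" "k \<noteq> m" and B: "0 \<le> B"
    and h: "h \<le> 1 + (1 - A) * psi k * h + (1 - A) * b1 + A * y * psi k * g + A * y * b2"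
    and b1: "b1 \<le> B" and b2: "b2 \<le> B" and g: "g \<le> (1 + Ey * B) / (1 - Phi)"
  shows "h \<le> (1 + Ey * B) / (1 - Phi)"
proof -
  define H where "H = (1 + Ey * B) / (1 - Phi)"
  have H0: "0 \<le> H" unfolding H_def using B Ey_ge1 Phi_lt1 by simp
  have HPhi: "H * (1 - Phi) = 1 + Ey * B" using Phi_lt1 by (simp add: H_def)
  have psi: "0 \<le> psi k" "psi k \<le> 1" using psi_nonneg[OF k(1)] psi_le1[OF k(1)] by auto
  have c1: "(1 - A) * b1 \<le> (1 - A) * B" using b1 A_le by (intro mult_left_mono) auto
  have c2: "A * y * psi k * g \<le> A * y * psi k * H"
    using g A_pos y_gt1 psi by (intro mult_left_mono) (auto simp: H_def)
  have c3: "A * y * b2 \<le> A * y * B" using b2 A_pos y_gt1 by (intro mult_left_mono) auto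
  have split_Ey: "(1 - A) * B + A * y * B = Ey * B" unfolding Ey_eq by (simp add: algebra_simps)
  have lhs: "h - (1 - A) * psi k * h \<le> 1 + Ey * B + A * y * psi k * H"
    using h c1 c2 c3 split_Ey by linarith
  have "Ey * psi k * H \<le> Phi * H" using Ey_psi_le_Phi[OF k] H0 by (rule mult_right_mono)
  moreover have "Ey * psi k * H = (1 - A) * psi k * H + A * y * psi k * H"
    unfolding Ey_eq by (simp add: algebra_simps)
  ultimately have rhs: "1 + Ey * B + A * y * psi k * H \<le> H - (1 - A) * psi k * H"
    using HPhi by (simp add: algebra_simps)
  have pos: "0 < 1 - (1 - A) * psi k"
    using mult_left_mono[OF psi(2), of "1 - A"] A_pos A_le by simp
  have "h * (1 - (1 - A) * psi k) \<le> H * (1 - (1 - A) * psi k)"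
    using lhs rhs by (simp add: algebra_simps)
  then show ?thesis using pos unfolding H_def[symmetric] by (rule mult_right_le_imp_le)
qed

lemma visits_fast_bound:
  assumes k: "k \<in> {1..l}" "k \<noteq> m" and B: "0 \<le> B"
    and upstream: "\<And>N TT. visits (k - 1) N TT \<le> B"
  shows "visits k N TT \<le> (1 + Ey * B) / (1 - Phi)"
proof (induction N arbitrary: TT rule: less_induct)
  case (less N)
  have g: "visits_before k N TT \<le> (1 + Ey * B) / (1 - Phi)"
    using less B Ey_ge1 Phi_lt1 by (cases N) (simp_all add: visits_before_0 visits_before_Suc)
  have b2: "visits_before (k - 1) N TT \<le> B"
    using upstream B by (cases N) (simp_all add: visits_before_0 visits_before_Suc)
  show ?case
    by (rule visit_recursion_closes[OF k B order_trans[OF visits_mono visits_step_fast[OF k]]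
          upstream b2 g])
qed

primrec visits_bound :: "nat \<Rightarrow> real" where
  "visits_bound 0 = (1 + bottleneck_bound) / A"
| "visits_bound (Suc j) = (1 + Ey * visits_bound j) / (1 - Phi)"

lemma visits_bound_nonneg: "0 \<le> visits_bound j"
proof (induction j)
  case 0 then show ?case using A_pos upstream_bound_nonneg Ey_ge1 by (simp add: bottleneck_bound_def)
next
  case (Suc j)
  then have "0 \<le> 1 + Ey * visits_bound j" using Ey_ge1 by simp
  then show ?case using Phi_lt1 by simp
qed

lemma visits_downstream: "m + j \<le> l \<Longrightarrow> visits (m + j) N TT \<le> visits_bound j"
proof (induction j arbitrary: N TT)
  case 0 then show ?case using visits_bottleneck by simp
next
  case (Suc j)
  have k: "m + Suc j \<in> {1..l}" "m + Suc j \<noteq> m" using Suc.prems m_ge by auto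
  show ?case
    using visits_fast_bound[OF k visits_bound_nonneg, of j] Suc by simp
qed

subsection \<open>Second claim: the expected delay\<close>

text \<open>P(Z_t < n) and P(R_t < n) for an unlimited source; by the truncation lemma
  rk_finite_source the latter is also P(R_t < n) for a source holding n packets.\<close>
definition PZ :: "nat \<Rightarrow> nat \<Rightarrow> real" where
  "PZ n t = (\<integral>\<omega>. of_bool (Z \<omega> t < n) \<partial>M)"

definition PR :: "nat \<Rightarrow> nat \<Rightarrow> real" where
  "PR n t = (\<integral>\<omega>. of_bool (rank \<omega> t l < n) \<partial>M)"

lemma integrable_PZ: "integrable M (\<lambda>\<omega>. of_bool (Z \<omega> t < n) :: real)"
  by (rule integrable_window[OF depends_on_Z])

lemma integrable_PR: "integrable M (\<lambda>\<omega>. of_bool (rank \<omega> t l < n) :: real)"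
  by (rule integrable_window[OF depends_on_rank])

lemma expectation_min_Z_step:
  "(\<integral>\<omega>. real (min (Z \<omega> (Suc t)) n) \<partial>M) = (\<integral>\<omega>. real (min (Z \<omega> t) n) \<partial>M) + A * PZ n t"
proof -
  have d: "depends_on (window l t) (\<lambda>\<omega>. of_bool (Z \<omega> t < n) :: real)" by (rule depends_on_Z)
  have "(\<integral>\<omega>. real (min (Z \<omega> (Suc t)) n) \<partial>M) =
        (\<integral>\<omega>. real (min (Z \<omega> t) n) + of_bool (Z \<omega> t < n) * of_bool (\<omega> (Suc t, m)) \<partial>M)"
    by (rule Bochner_Integration.integral_cong) auto
  also have "\<dots> = (\<integral>\<omega>. real (min (Z \<omega> t) n) \<partial>M) +
      (\<integral>\<omega>. of_bool (Z \<omega> t < n) * of_bool (\<omega> (Suc t, m)) \<partial>M)"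
    by (intro Bochner_Integration.integral_add integrable_window[OF depends_on_Z]
        integrable_times_link[OF d m_le])
  also have "(\<integral>\<omega>. of_bool (Z \<omega> t < n) * of_bool (\<omega> (Suc t, m)) \<partial>M) = A * PZ n t"
    using expectation_times_link_m[OF d, of of_bool] by (simp add: PZ_def)
  finally show ?thesis .
qed

lemma sum_PZ: "A * (\<Sum>t<TT. PZ n t) = (\<integral>\<omega>. real (min (Z \<omega> TT) n) \<partial>M)"
proof (induction TT)
  case (Suc TT)
  then show ?case by (simp del: succ_count.simps add: expectation_min_Z_step algebra_simps)
qed simp

lemma sum_PZ_le: "(\<Sum>t<TT. PZ n t) \<le> real n / A"
proof -
  interpret prob_space M by (rule prob_space_erasure_space)
  have "(\<integral>\<omega>. real (min (Z \<omega> TT) n) \<partial>M) \<le> (\<integral>\<omega>. real n \<partial>M)"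
    by (rule integral_mono) (auto intro: integrable_window[OF depends_on_Z])
  also have "\<dots> = real n" using prob_space by simp
  finally have "A * (\<Sum>t<TT. PZ n t) \<le> real n" using sum_PZ by simp
  then show ?thesis using A_pos by (simp add: pos_le_divide_eq mult.commute)
qed

lemma PZ_antimono: "t \<le> t' \<Longrightarrow> PZ n t' \<le> PZ n t"
  unfolding PZ_def
proof (rule integral_mono)
  fix \<omega> assume "t \<le> t'"
  then have "Z \<omega> t \<le> Z \<omega> t'" by (rule succ_count_mono)
  then show "of_bool (Z \<omega> t' < n) \<le> (of_bool (Z \<omega> t < n) :: real)" by simp
qed (rule integrable_PZ)+

lemma PZ_le_PR: "PZ n t \<le> PR n t"
  unfolding PZ_def PR_def
  by (rule integral_mono[OF integrable_PZ integrable_PR]) (auto intro: le_less_trans[OF rk_last_le_Z])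

text \<open>Lower bound: already the bottleneck needs about n/A steps.  After n^2 steps the
  probability that Z_t < n is at most 1/(nA), which bounds the neglected tail.\<close>
lemma sum_PR_lower:
  assumes n: "1 \<le> n"
  shows "real n / A - 1 / A ^ 2 \<le> (\<Sum>t<n * n. PR n t)"
proof -
  interpret prob_space M by (rule prob_space_erasure_space)
  define TT where "TT = n * n"
  have "(\<integral>\<omega>. real n - real n * of_bool (Z \<omega> TT < n) \<partial>M) \<le> (\<integral>\<omega>. real (min (Z \<omega> TT) n) \<partial>M)"
    by (rule integral_mono) (auto intro!: integrable_window[OF depends_on_Z] integrable_PZ)
  moreover have "(\<integral>\<omega>. real n - real n * of_bool (Z \<omega> TT < n) \<partial>M) = real n - real n * PZ n TT"
    using integrable_PZ[of TT n] prob_space by (simp add: PZ_def)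
  ultimately have a: "real n - real n * PZ n TT \<le> A * (\<Sum>t<TT. PZ n t)"
    by (simp add: sum_PZ)
  have "real (Suc TT) * PZ n TT = (\<Sum>t<Suc TT. PZ n TT)" by simp
  also have "\<dots> \<le> (\<Sum>t<Suc TT. PZ n t)" by (intro sum_mono PZ_antimono) simp
  also have "\<dots> \<le> real n / A" by (rule sum_PZ_le)
  finally have b: "real (Suc TT) * PZ n TT \<le> real n / A" .
  have c: "real n * PZ n TT \<le> 1 / A"
  proof -
    have "real n * (real (Suc TT) * PZ n TT) \<le> real n * (real n / A)"
      using b by (rule mult_left_mono) simp
    also have "\<dots> = real (n * n) / A" by simp
    also have "\<dots> \<le> real (Suc TT) * (1 / A)" using A_pos by (simp add: TT_def divide_right_mono)
    finally have "real (Suc TT) * (real n * PZ n TT) \<le> real (Suc TT) * (1 / A)"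
      by (simp add: algebra_simps)
    then show ?thesis by (rule mult_left_le_imp_le) simp
  qed
  have "real n - 1 / A \<le> A * (\<Sum>t<TT. PZ n t)" using a c by linarith
  then have "(real n - 1 / A) / A \<le> (\<Sum>t<TT. PZ n t)"
    using A_pos by (simp add: divide_le_eq mult.commute)
  also have "\<dots> \<le> (\<Sum>t<TT. PR n t)" by (intro sum_mono PZ_le_PR)
  finally show ?thesis using A_pos by (simp add: TT_def diff_divide_distrib power2_eq_square)
qed

text \<open>Upper bound, pointwise: if R_t < n <= Z_t = n + j, the lag Z_t - R_t is at least
  j + 1, so V l t u^(j+1) >= 1.\<close>
lemma R_below_indicator_le:
  assumes "t < TT"
  shows "of_bool (rank \<omega> t l < n) \<le> of_bool (Z \<omega> t < n) +
           (\<Sum>j<TT. of_bool (Z \<omega> t = n + j) * V l t \<omega> * u ^ Suc j)"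
proof -
  have nonneg: "0 \<le> (\<Sum>j<TT. of_bool (Z \<omega> t = n + j) * V l t \<omega> * u ^ Suc j)"
    using V_nonneg u_pos by (intro sum_nonneg) simp
  show ?thesis
  proof (cases "rank \<omega> t l < n \<and> \<not> Z \<omega> t < n")
    case False then show ?thesis using nonneg by auto
  next
    case True
    define j0 where "j0 = Z \<omega> t - n"
    have j0: "Z \<omega> t = n + j0" using True by (simp add: j0_def)
    have j0T: "j0 \<in> {..<TT}" using succ_count_le[of m \<omega> t] assms by (simp add: j0_def)
    have lag: "Suc j0 \<le> Z \<omega> t - rank \<omega> t l" using True j0 by simp
    have "1 = (y * u) ^ Suc j0" by (simp add: y_times_u)
    also have "\<dots> \<le> V l t \<omega> * u ^ Suc j0"
      unfolding V_eq_lag[OF m_le order.refl] power_mult_distrib using lag y_gt1 u_pos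
      by (intro mult_right_mono power_increasing) auto
    also have "\<dots> = of_bool (Z \<omega> t = n + j0) * V l t \<omega> * u ^ Suc j0" using j0 by simp
    also have "\<dots> \<le> (\<Sum>j<TT. of_bool (Z \<omega> t = n + j) * V l t \<omega> * u ^ Suc j)"
      by (rule member_le_sum[OF j0T]) (use V_nonneg u_pos in simp_all)
    finally show ?thesis using True by simp
  qed
qed

text \<open>The geometric weights u^(j+1) sum the uniformly bounded Palm sums of the last link.\<close>
lemma sum_weighted_visits:
  "(\<Sum>t<TT. \<Sum>j<TT. u ^ Suc j * (\<integral>\<omega>. of_bool (Z \<omega> t = n + j) * V l t \<omega> \<partial>M))
     \<le> visits_bound (l - m) / delta"
proof -
  define H where "H = visits_bound (l - m)"
  have "(\<Sum>t<TT. \<Sum>j<TT. u ^ Suc j * (\<integral>\<omega>. of_bool (Z \<omega> t = n + j) * V l t \<omega> \<partial>M))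
     = (\<Sum>j<TT. u ^ Suc j * visits l (n + j) TT)"
    unfolding visits_def by (subst sum.swap) (simp only: sum_distrib_left)
  also have "\<dots> \<le> (\<Sum>j<TT. u ^ Suc j * H)"
    using visits_downstream[of "l - m"] m_le u_pos
    by (intro sum_mono mult_left_mono) (simp_all add: H_def)
  also have "\<dots> = u * H * (\<Sum>j<TT. u ^ j)"
    by (simp add: sum_distrib_left algebra_simps)
  also have "\<dots> \<le> u * H * (1 / (1 - u))"
  proof (rule mult_left_mono)
    have "(\<Sum>j<TT. u ^ j) = (1 - u ^ TT) / (1 - u)" using u_lt1 by (simp add: sum_gp_strict)
    also have "\<dots> \<le> 1 / (1 - u)" using u_lt1 u_pos by (intro divide_right_mono) auto
    finally show "(\<Sum>j<TT. u ^ j) \<le> 1 / (1 - u)" .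
    show "0 \<le> u * H" using u_pos visits_bound_nonneg by (simp add: H_def)
  qed
  also have "u * H * (1 / (1 - u)) = H / delta"
  proof -
    have "0 < delta + delta * delta" using delta_pos by (simp add: add_pos_pos)
    then show ?thesis using delta_pos by (simp add: u_def field_simps)
  qed
  finally show ?thesis by (simp add: H_def)
qed

lemma sum_PR_upper: "(\<Sum>t<TT. PR n t) \<le> real n / A + visits_bound (l - m) / delta"
proof -
  let ?W = "\<lambda>t j. (\<integral>\<omega>. of_bool (Z \<omega> t = n + j) * V l t \<omega> \<partial>M)"
  have weighted: "integrable M (\<lambda>\<omega>. of_bool (Z \<omega> t = n + j) * V l t \<omega> * u ^ Suc j)" for t j
    using integrable_window[OF depends_on_visit[of l t "\<lambda>z. z = n + j"]] by simp
  have step: "PR n t \<le> PZ n t + (\<Sum>j<TT. u ^ Suc j * ?W t j)" if "t < TT" for t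
  proof -
    have "PR n t \<le> (\<integral>\<omega>. of_bool (Z \<omega> t < n) +
        (\<Sum>j<TT. of_bool (Z \<omega> t = n + j) * V l t \<omega> * u ^ Suc j) \<partial>M)"
      unfolding PR_def
      by (rule integral_mono[OF integrable_PR _ R_below_indicator_le[OF that]])
        (use integrable_PZ weighted in simp)
    also have "\<dots> = PZ n t + (\<Sum>j<TT. u ^ Suc j * ?W t j)"
      using integrable_PZ weighted
      by (simp add: PZ_def Bochner_Integration.integral_sum mult.commute)
    finally show ?thesis .
  qed
  have "(\<Sum>t<TT. PR n t) \<le> (\<Sum>t<TT. PZ n t + (\<Sum>j<TT. u ^ Suc j * ?W t j))"
    by (intro sum_mono step) simp
  also have "\<dots> = (\<Sum>t<TT. PZ n t) + (\<Sum>t<TT. \<Sum>j<TT. u ^ Suc j * ?W t j)"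
    by (rule sum.distrib)
  finally show ?thesis using sum_PZ_le[where TT=TT and n=n] sum_weighted_visits[where TT=TT and n=n]
    by linarith
qed

lemma expected_T: "(\<integral>\<^sup>+\<omega>. T l n \<omega> \<partial>M) = (\<Sum>t. ennreal (PR n t))"
proof -
  have "(\<integral>\<^sup>+\<omega>. T l n \<omega> \<partial>M) = (\<integral>\<^sup>+\<omega>. (\<Sum>t. ennreal (of_bool (rank \<omega> t l < n))) \<partial>M)"
    by (simp add: T_eq_suminf)
  also have "\<dots> = (\<Sum>t. \<integral>\<^sup>+\<omega>. ennreal (of_bool (rank \<omega> t l < n)) \<partial>M)"
  proof (rule nn_integral_suminf)
    fix t show "(\<lambda>\<omega>. ennreal (of_bool (rank \<omega> t l < n))) \<in> borel_measurable M"
      using measurable_compose[OF depends_on_measurable[OF finite_window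
          depends_on_rank[where t=t and f="\<lambda>r. of_bool (r < n)"]] measurable_ennreal] by simp
  qed
  also have "\<dots> = (\<Sum>t. ennreal (PR n t))"
    unfolding PR_def by (intro suminf_cong nn_integral_eq_integral integrable_PR) simp
  finally show ?thesis .
qed

theorem delay_bound:
  assumes "1 \<le> n"
  shows "(\<integral>\<^sup>+\<omega>. T l n \<omega> \<partial>M) \<noteq> \<infinity> \<and>
     \<bar>enn2real (\<integral>\<^sup>+\<omega>. T l n \<omega> \<partial>M) - real n / A\<bar> \<le> visits_bound (l - m) / delta + 1 / A ^ 2"
proof -
  have nonneg: "0 \<le> PR n t" for t unfolding PR_def by (rule integral_nonneg_AE) simp
  have summable: "summable (PR n)" using nonneg sum_PR_upper by (rule summableI_nonneg_bounded)
  have eq: "(\<integral>\<^sup>+\<omega>. T l n \<omega> \<partial>M) = ennreal (\<Sum>t. PR n t)"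
    unfolding expected_T using nonneg summable by (rule suminf_ennreal2)
  have upper: "(\<Sum>t. PR n t) \<le> real n / A + visits_bound (l - m) / delta"
    using summable sum_PR_upper by (rule suminf_le_const)
  have "(\<Sum>t<n * n. PR n t) \<le> (\<Sum>t. PR n t)"
    using summable by (rule sum_le_suminf) (auto simp: nonneg)
  then have lower: "real n / A - 1 / A ^ 2 \<le> (\<Sum>t. PR n t)"
    using sum_PR_lower[OF assms] by linarith
  have "0 \<le> visits_bound (l - m) / delta" using visits_bound_nonneg delta_pos by simp
  moreover have "0 \<le> 1 / A ^ 2" by simp
  ultimately have "\<bar>(\<Sum>t. PR n t) - real n / A\<bar> \<le> visits_bound (l - m) / delta + 1 / A ^ 2"
    using upper lower by (intro abs_leI) linarith+
  moreover have "0 \<le> (\<Sum>t. PR n t)" using summable nonneg by (simp add: suminf_nonneg)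
  ultimately show ?thesis using eq by simp
qed

end

theorem mainTheorem8:
  fixes l :: nat and p :: "nat \<Rightarrow> real" and m :: nat
  assumes "l \<ge> 1"
    and "\<forall>i\<in>{1..l}. 0 \<le> p i \<and> p i < 1"
    and "m \<in> {1..l}"
    and "\<forall>i\<in>{1..l}. i \<noteq> m \<longrightarrow> p i < p m"
  shows "(\<exists>C. \<forall>t::nat.
            \<bar>(1 - p m) * real t
              - (\<integral>\<omega>. real (R l \<infinity> t \<omega>) \<partial>erasure_space p)\<bar> \<le> C)
       \<and> (\<exists>C. \<forall>n::nat. n \<ge> 1 \<longrightarrow>
            (\<integral>\<^sup>+\<omega>. T l n \<omega> \<partial>erasure_space p) \<noteq> \<infinity> \<and>
            \<bar>enn2real (\<integral>\<^sup>+\<omega>. T l n \<omega> \<partial>erasure_space p) - real n / (1 - p m)\<bar> \<le> C)"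
proof -
  interpret line_network l p m using assms by unfold_locales
  show ?thesis
    using throughput_deficit delay_bound unfolding A_def by blast
qed

end
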